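(* Let $H_0\subset H_1$ be dual $t$-motives, $H_0$ a $\bar k[t,\sigma]$-submodule of $H_1$, with $\dim_{\bar k}H_1/H_0<\infty$. Then there exists $0\ne a\in\mathbb F_q[t]$ with $aH_1\subset H_0$.
   Context: $\bar k$ is the algebraic closure of $k=\mathbb F_q(T)$ in $\mathbb C_\infty$; $t$ is a variable. $\bar k[t,\sigma]$ is the ring generated over $\bar k$ by a variable $t$ (central, commuting with $\bar k$ and $\sigma$) and a variable $\sigma$ with $\sigma x=x^{q^{-1}}\sigma$ for $x\in\bar k$. A dual $t$-motive is a left $\bar k[t,\sigma]$-module $H$ that is free of finite rank over $\bar k[t]$, free of finite rank over $\bar k[\sigma]$, and satisfies $(t-T)^nH\subset\sigma H$ for $n\gg0$. *)

theory Defs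
  imports "HOL-Computational_Algebra.Polynomial"
begin

definition Fq :: "nat \<Rightarrow> 'k::field set" where
  "Fq q = {x. x ^ q = x}"

definition FqT :: "nat \<Rightarrow> 'k::field \<Rightarrow> 'k set" where
  "FqT q T = {poly f T / poly g T | f g.
      (\<forall>i. coeff f i \<in> Fq q) \<and> (\<forall>i. coeff g i \<in> Fq q) \<and> poly g T \<noteq> 0}"

text \<open>The algebraically closed field 'k is (isomorphic to) an algebraic closure of F_q(T),
  where q is a power of the characteristic p and T is transcendental over F_q.\<close>
definition is_kbar :: "nat \<Rightarrow> 'k::alg_closed_field \<Rightarrow> bool" where
  "is_kbar q T \<longleftrightarrow>
     prime CHAR('k) \<and> (\<exists>e>0. q = CHAR('k) ^ e) \<and>
     (\<forall>f. (\<forall>i. coeff f i \<in> Fq q) \<and> poly f T = 0 \<longrightarrow> f = 0) \<and>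
     (\<forall>x. \<exists>f. f \<noteq> 0 \<and> (\<forall>i. coeff f i \<in> FqT q T) \<and> poly f x = 0)"

text \<open>A left k-bar[t,sigma]-module is given on a carrier H by the k-bar scalar action sm,
  the action tt of t and the action sg of sigma.\<close>

definition t_act :: "('k::field \<Rightarrow> 'm::ab_group_add \<Rightarrow> 'm) \<Rightarrow> ('m \<Rightarrow> 'm) \<Rightarrow> 'k poly \<Rightarrow> 'm \<Rightarrow> 'm" where
  "t_act sm tt f m = (\<Sum>i\<le>degree f. sm (coeff f i) ((tt ^^ i) m))"

text \<open>Elements of k-bar[sigma] are written sum_i c_i sigma^i (coefficients on the left);
  we encode them by their coefficient sequence as a 'k poly.\<close>
definition s_act :: "('k::field \<Rightarrow> 'm::ab_group_add \<Rightarrow> 'm) \<Rightarrow> ('m \<Rightarrow> 'm) \<Rightarrow> 'k poly \<Rightarrow> 'm \<Rightarrow> 'm" where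
  "s_act sm sg g m = (\<Sum>i\<le>degree g. sm (coeff g i) ((sg ^^ i) m))"

definition kts_module :: "nat \<Rightarrow> ('k::field \<Rightarrow> 'm::ab_group_add \<Rightarrow> 'm) \<Rightarrow> ('m \<Rightarrow> 'm) \<Rightarrow> ('m \<Rightarrow> 'm) \<Rightarrow> 'm set \<Rightarrow> bool" where
  "kts_module q sm tt sg H \<longleftrightarrow>
     0 \<in> H \<and> (\<forall>x\<in>H. \<forall>y\<in>H. x + y \<in> H) \<and> (\<forall>x\<in>H. - x \<in> H) \<and>
     (\<forall>c. \<forall>x\<in>H. sm c x \<in> H) \<and> (\<forall>x\<in>H. tt x \<in> H) \<and> (\<forall>x\<in>H. sg x \<in> H) \<and>
     (\<forall>c. \<forall>x\<in>H. \<forall>y\<in>H. sm c (x + y) = sm c x + sm c y) \<and>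
     (\<forall>c d. \<forall>x\<in>H. sm (c + d) x = sm c x + sm d x) \<and>
     (\<forall>c d. \<forall>x\<in>H. sm (c * d) x = sm c (sm d x)) \<and>
     (\<forall>x\<in>H. sm 1 x = x) \<and>
     (\<forall>x\<in>H. \<forall>y\<in>H. tt (x + y) = tt x + tt y) \<and>
     (\<forall>c. \<forall>x\<in>H. tt (sm c x) = sm c (tt x)) \<and>
     (\<forall>x\<in>H. \<forall>y\<in>H. sg (x + y) = sg x + sg y) \<and>
     (\<forall>c. \<forall>x\<in>H. sg (sm (c ^ q) x) = sm c (sg x)) \<and>
     (\<forall>x\<in>H. tt (sg x) = sg (tt x))"

definition free_fin_rank_t :: "('k::field \<Rightarrow> 'm::ab_group_add \<Rightarrow> 'm) \<Rightarrow> ('m \<Rightarrow> 'm) \<Rightarrow> 'm set \<Rightarrow> bool" where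
  "free_fin_rank_t sm tt H \<longleftrightarrow> (\<exists>B. finite B \<and> B \<subseteq> H \<and>
     (\<forall>m\<in>H. \<exists>!f. (\<forall>b. b \<notin> B \<longrightarrow> f b = 0) \<and> m = (\<Sum>b\<in>B. t_act sm tt (f b) b)))"

definition free_fin_rank_sigma :: "('k::field \<Rightarrow> 'm::ab_group_add \<Rightarrow> 'm) \<Rightarrow> ('m \<Rightarrow> 'm) \<Rightarrow> 'm set \<Rightarrow> bool" where
  "free_fin_rank_sigma sm sg H \<longleftrightarrow> (\<exists>B. finite B \<and> B \<subseteq> H \<and>
     (\<forall>m\<in>H. \<exists>!g. (\<forall>b. b \<notin> B \<longrightarrow> g b = 0) \<and> m = (\<Sum>b\<in>B. s_act sm sg (g b) b)))"

definition dual_t_motive :: "nat \<Rightarrow> 'k::field \<Rightarrow> ('k \<Rightarrow> 'm::ab_group_add \<Rightarrow> 'm) \<Rightarrow> ('m \<Rightarrow> 'm) \<Rightarrow> ('m \<Rightarrow> 'm) \<Rightarrow> 'm set \<Rightarrow> bool" where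
  "dual_t_motive q T sm tt sg H \<longleftrightarrow>
     kts_module q sm tt sg H \<and> free_fin_rank_t sm tt H \<and> free_fin_rank_sigma sm sg H \<and>
     (\<exists>n. \<forall>m\<in>H. \<exists>m'\<in>H. t_act sm tt ([:- T, 1:] ^ n) m = sg m')"

text \<open>dim over k-bar of H1/H0 is finite: finitely many elements span H1 modulo H0.\<close>
definition fin_dim_quotient :: "('k::field \<Rightarrow> 'm::ab_group_add \<Rightarrow> 'm) \<Rightarrow> 'm set \<Rightarrow> 'm set \<Rightarrow> bool" where
  "fin_dim_quotient sm H1 H0 \<longleftrightarrow> (\<exists>V. finite V \<and> V \<subseteq> H1 \<and>
     (\<forall>m\<in>H1. \<exists>c. m - (\<Sum>v\<in>V. sm (c v) v) \<in> H0))"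

end

(*
  Since H1/H0 is finite-dimensional over k-bar, the polynomials of k-bar[t] annihilating it form a
  nonzero ideal; let mu be its monic generator. Write f^(q) for f with every coefficient raised to
  the q-th power, so that sigma (f^(q) x) = f (sigma x). From (t - T)^n H <= sigma H for H = H0, H1
  and the injectivity of sigma one gets that mu divides both (t - T)^n1 mu^(1/q) and
  (t - T^q)^n0 mu^(q). The first divisibility makes the roots alpha <> T of mu stable under
  alpha |-> alpha^q; as T is transcendental over F_q, its Frobenius orbit is infinite, so T^q is not
  a root of mu, and the second divisibility gives mu | mu^(q). Both are monic of the same degree,
  hence mu = mu^(q), i.e. mu lies in F_q[t].
*)
theory Submission
  imports Defs "HOL-Computational_Algebra.Primes"
begin

section \<open>Modules over \<open>k[t, \<sigma>]\<close>\<close>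

abbreviation frob_poly :: "nat \<Rightarrow> 'a::comm_semiring_1 poly \<Rightarrow> 'a poly" where
  "frob_poly q \<equiv> map_poly (\<lambda>c. c ^ q)"

definition lincomb :: "('k \<Rightarrow> 'm::ab_group_add \<Rightarrow> 'm) \<Rightarrow> 'm set \<Rightarrow> ('m \<Rightarrow> 'k) \<Rightarrow> 'm" where
  "lincomb sm V c = (\<Sum>w\<in>V. sm (c w) w)"

definition annihilates ::
    "('k::field \<Rightarrow> 'm::ab_group_add \<Rightarrow> 'm) \<Rightarrow> ('m \<Rightarrow> 'm) \<Rightarrow> 'm set \<Rightarrow> 'm set \<Rightarrow> 'k poly \<Rightarrow> bool" where
  "annihilates sm tt H1 H0 f \<longleftrightarrow> (\<forall>m\<in>H1. t_act sm tt f m \<in> H0)"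

lemma s_act_eq_t_act: "s_act = t_act"
  by (intro ext) (simp add: s_act_def t_act_def)

locale kts =
  fixes q :: nat and sm :: "'k::field \<Rightarrow> 'm::ab_group_add \<Rightarrow> 'm" and tt sg :: "'m \<Rightarrow> 'm"
    and H :: "'m set"
  assumes kts_module: "kts_module q sm tt sg H"
begin

lemma zero_closed: "0 \<in> H"
  and add_closed: "x \<in> H \<Longrightarrow> y \<in> H \<Longrightarrow> x + y \<in> H"
  and uminus_closed: "x \<in> H \<Longrightarrow> - x \<in> H"
  and sm_closed: "x \<in> H \<Longrightarrow> sm c x \<in> H"
  and tt_closed: "x \<in> H \<Longrightarrow> tt x \<in> H"
  and sg_closed: "x \<in> H \<Longrightarrow> sg x \<in> H"
  and sm_add_right: "x \<in> H \<Longrightarrow> y \<in> H \<Longrightarrow> sm c (x + y) = sm c x + sm c y"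
  and sm_add_left: "x \<in> H \<Longrightarrow> sm (c + d) x = sm c x + sm d x"
  and sm_mult: "x \<in> H \<Longrightarrow> sm (c * d) x = sm c (sm d x)"
  and tt_add: "x \<in> H \<Longrightarrow> y \<in> H \<Longrightarrow> tt (x + y) = tt x + tt y"
  and tt_sm: "x \<in> H \<Longrightarrow> tt (sm c x) = sm c (tt x)"
  and sg_add: "x \<in> H \<Longrightarrow> y \<in> H \<Longrightarrow> sg (x + y) = sg x + sg y"
  and sg_sm: "x \<in> H \<Longrightarrow> sg (sm (c ^ q) x) = sm c (sg x)"
  and tt_sg: "x \<in> H \<Longrightarrow> tt (sg x) = sg (tt x)"
  using kts_module by (simp_all add: kts_module_def)

lemma diff_closed: "x \<in> H \<Longrightarrow> y \<in> H \<Longrightarrow> x - y \<in> H"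
  using add_closed uminus_closed by (metis diff_conv_add_uminus)

lemma sum_closed: "(\<And>i. i \<in> A \<Longrightarrow> g i \<in> H) \<Longrightarrow> sum g A \<in> H"
  by (induction A rule: infinite_finite_induct) (auto intro: zero_closed add_closed)

context
  fixes f :: "'m \<Rightarrow> 'm"
  assumes additive: "\<And>x y. x \<in> H \<Longrightarrow> y \<in> H \<Longrightarrow> f (x + y) = f x + f y"
begin

lemma additive_zero: "f 0 = 0"
  using additive[OF zero_closed zero_closed] by simp

lemma additive_diff: "x \<in> H \<Longrightarrow> y \<in> H \<Longrightarrow> f (x - y) = f x - f y"
  using additive[OF diff_closed] by (metis add_diff_cancel diff_add_cancel)

lemma additive_sum: "(\<And>i. i \<in> A \<Longrightarrow> g i \<in> H) \<Longrightarrow> f (sum g A) = (\<Sum>i\<in>A. f (g i))"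
proof (induction A rule: infinite_finite_induct)
  case (insert x F)
  then show ?case using additive[of "g x" "sum g F"] sum_closed[of F g] by simp
qed (simp_all add: additive_zero)

end

lemma sm_zero_left: "x \<in> H \<Longrightarrow> sm 0 x = 0"
  using sm_add_left[of x 0 0] by simp

lemma sm_zero_right: "sm c 0 = 0"
  by (rule additive_zero) (rule sm_add_right)

lemma sm_sum_left: "x \<in> H \<Longrightarrow> sm (\<Sum>i\<in>I. c i) x = (\<Sum>i\<in>I. sm (c i) x)"
  by (induction I rule: infinite_finite_induct) (simp_all add: sm_zero_left sm_add_left)

lemma t_act_0: "m \<in> H \<Longrightarrow> t_act sm u 0 m = 0"
  by (simp add: t_act_def sm_zero_left)

context
  fixes u :: "'m \<Rightarrow> 'm"
  assumes u_closed: "\<And>x. x \<in> H \<Longrightarrow> u x \<in> H"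
begin

lemma funpow_closed: "m \<in> H \<Longrightarrow> (u ^^ i) m \<in> H"
  by (induction i) (auto intro: u_closed)

lemma t_act_pCons_shift:
  assumes m: "m \<in> H"
  shows "t_act sm u (pCons a f) m = sm a m + t_act sm u f (u m)"
proof -
  have "t_act sm u (pCons a f) m = (\<Sum>i\<le>Suc (degree f). sm (coeff (pCons a f) i) ((u ^^ i) m))"
    unfolding t_act_def
    by (rule sum.mono_neutral_left)
      (use degree_pCons_le sm_zero_left funpow_closed[OF m] in \<open>auto simp: coeff_eq_0\<close>)
  also have "\<dots> = sm a m + (\<Sum>i\<le>degree f. sm (coeff f i) ((u ^^ Suc i) m))"
    by (subst sum.atMost_Suc_shift) simp
  also have "(\<Sum>i\<le>degree f. sm (coeff f i) ((u ^^ Suc i) m)) = t_act sm u f (u m)"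
    unfolding t_act_def by (simp add: funpow_Suc_right del: funpow.simps)
  finally show ?thesis .
qed

lemma t_act_closed: "m \<in> H \<Longrightarrow> t_act sm u f m \<in> H"
proof (induction f arbitrary: m)
  case (pCons a f)
  then show ?case by (simp add: t_act_pCons_shift add_closed sm_closed u_closed)
qed (simp add: t_act_0 zero_closed)

end

lemma tt_t_act: "m \<in> H \<Longrightarrow> tt (t_act sm tt f m) = t_act sm tt f (tt m)"
proof (induction f arbitrary: m)
  case 0
  then show ?case by (simp add: t_act_0 tt_closed additive_zero[OF tt_add])
next
  case (pCons a f)
  then show ?case
    by (simp add: t_act_pCons_shift tt_closed tt_add tt_sm sm_closed t_act_closed)
qed

lemma t_act_pCons: "m \<in> H \<Longrightarrow> t_act sm tt (pCons a f) m = sm a m + tt (t_act sm tt f m)"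
  by (simp add: t_act_pCons_shift tt_closed tt_t_act)

lemma t_act_add:
  assumes m: "m \<in> H"
  shows "t_act sm tt (f + g) m = t_act sm tt f m + t_act sm tt g m"
proof (induction f g rule: poly_induct2)
  case (pCons a p b q)
  then show ?case
    using m by (simp add: t_act_pCons sm_add_left tt_add t_act_closed tt_closed algebra_simps)
qed (simp add: t_act_0 m)

lemma t_act_diff: "m \<in> H \<Longrightarrow> t_act sm tt (f - g) m = t_act sm tt f m - t_act sm tt g m"
  using t_act_add[of m "f - g" g] by simp

lemma t_act_smult:
  assumes m: "m \<in> H"
  shows "t_act sm tt (smult c f) m = sm c (t_act sm tt f m)"
proof (induction f)
  case (pCons a f)
  then show ?case
    using m by (simp add: t_act_pCons sm_mult tt_sm sm_add_right sm_closed tt_closed t_act_closed)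
qed (simp add: t_act_0 m sm_zero_right)

lemma t_act_mult:
  assumes m: "m \<in> H"
  shows "t_act sm tt (f * g) m = t_act sm tt f (t_act sm tt g m)"
proof (induction f)
  case (pCons a f)
  have "t_act sm tt (pCons a f * g) m = t_act sm tt (smult a g + pCons 0 (f * g)) m"
    by simp
  also have "\<dots> = t_act sm tt (pCons a f) (t_act sm tt g m)"
    using pCons m by (simp add: t_act_add t_act_smult t_act_pCons sm_zero_left t_act_closed tt_closed)
  finally show ?case .
qed (simp add: t_act_0 m t_act_closed tt_closed)

lemma t_act_sum: "m \<in> H \<Longrightarrow> t_act sm tt (\<Sum>i\<in>A. f i) m = (\<Sum>i\<in>A. t_act sm tt (f i) m)"
  by (induction A rule: infinite_finite_induct) (simp_all add: t_act_0 t_act_add)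

lemma t_act_sm_right: "m \<in> H \<Longrightarrow> t_act sm tt f (sm c m) = sm c (t_act sm tt f m)"
proof (induction f arbitrary: m)
  case (pCons a f)
  have "sm a (sm c m) = sm c (sm a m)"
    using pCons.prems by (simp flip: sm_mult add: mult.commute)
  with pCons show ?case
    by (simp add: t_act_pCons sm_closed tt_closed t_act_closed sm_add_right tt_sm)
qed (simp add: t_act_0 sm_closed sm_zero_right)

lemma t_act_add_right:
  "x \<in> H \<Longrightarrow> y \<in> H \<Longrightarrow> t_act sm tt f (x + y) = t_act sm tt f x + t_act sm tt f y"
proof (induction f arbitrary: x y)
  case (pCons a f)
  then show ?case
    by (simp add: t_act_pCons add_closed tt_closed t_act_closed sm_add_right tt_add algebra_simps)
qed (simp add: t_act_0 add_closed)

lemma sg_t_act_frob_poly: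
  assumes q: "q > 0" and m: "m \<in> H"
  shows "sg (t_act sm tt (frob_poly q f) m) = t_act sm tt f (sg m)"
proof (induction f)
  case (pCons a f)
  have "frob_poly q (pCons a f) = pCons (a ^ q) (frob_poly q f)"
    using q by (simp add: map_poly_pCons)
  with pCons m show ?case
    by (simp add: t_act_pCons sg_add sm_closed tt_closed t_act_closed sg_sm sg_closed
        flip: tt_sg)
qed (simp add: t_act_0 m sg_closed additive_zero[OF sg_add])

lemma sg_s_act:
  assumes r: "\<And>c. r c ^ q = c" and r0: "r 0 = 0" and m: "m \<in> H"
  shows "sg (s_act sm sg g m) = s_act sm sg (map_poly r g) (sg m)"
  using m unfolding s_act_eq_t_act
proof (induction g arbitrary: m)
  case (pCons a g)
  have "sg (sm a m) = sm (r a) (sg m)"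
    using sg_sm[OF pCons.prems, of "r a"] by (simp add: r)
  with pCons show ?case
    by (simp add: t_act_pCons_shift sg_closed sm_closed t_act_closed sg_add map_poly_pCons r0)
qed (simp add: t_act_0 sg_closed additive_zero[OF sg_add])

lemma sg_sum_s_act:
  assumes r: "\<And>c. r c ^ q = c" and r0: "r 0 = 0" and B: "B \<subseteq> H"
  shows "sg (\<Sum>b\<in>B. s_act sm sg (g b) b) = (\<Sum>b\<in>B. s_act sm sg (pCons 0 (map_poly r (g b))) b)"
proof -
  have "sg (\<Sum>b\<in>B. s_act sm sg (g b) b) = (\<Sum>b\<in>B. sg (s_act sm sg (g b) b))"
    using B by (intro additive_sum[OF sg_add]) (auto simp: s_act_eq_t_act intro: t_act_closed sg_closed)
  also have "\<dots> = (\<Sum>b\<in>B. s_act sm sg (pCons 0 (map_poly r (g b))) b)"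
  proof (rule sum.cong[OF refl])
    fix b assume "b \<in> B"
    with B have b: "b \<in> H" by blast
    show "sg (s_act sm sg (g b) b) = s_act sm sg (pCons 0 (map_poly r (g b))) b"
      using sg_s_act[OF r r0 b] t_act_pCons_shift[OF sg_closed b]
      by (simp add: s_act_eq_t_act sm_zero_left b)
  qed
  finally show ?thesis .
qed

text \<open>As \<open>\<sigma>\<close> is only semilinear, freeness over \<open>k[\<sigma>]\<close> yields injectivity of \<open>\<sigma>\<close> only
  once coefficients can be pulled through \<open>\<sigma>\<close>, i.e. given \<open>q\<close>-th roots \<open>r\<close>.\<close>
lemma sg_eq_0_imp_eq_0:
  fixes r :: "'k \<Rightarrow> 'k"
  assumes free: "free_fin_rank_sigma sm sg H" and q: "q > 0" and r: "\<And>c. r c ^ q = c"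
    and x: "x \<in> H" and sx: "sg x = 0"
  shows "x = 0"
proof -
  have r0: "r 0 = 0"
    using r[of 0] by simp
  obtain B where B: "finite B" "B \<subseteq> H" and unique:
    "\<forall>m\<in>H. \<exists>!g. (\<forall>b. b \<notin> B \<longrightarrow> g b = 0) \<and> m = (\<Sum>b\<in>B. s_act sm sg (g b) b)"
    using free unfolding free_fin_rank_sigma_def by (elim exE conjE) (rule that)
  obtain g where g: "\<forall>b. b \<notin> B \<longrightarrow> g b = 0" and x_eq: "x = (\<Sum>b\<in>B. s_act sm sg (g b) b)"
    using ex1_implies_ex[OF unique[rule_format, OF x]] by blast
  define g' where "g' b = pCons 0 (map_poly r (g b))" for b
  let ?coords = "\<lambda>h. (\<forall>b. b \<notin> B \<longrightarrow> h b = 0) \<and> 0 = (\<Sum>b\<in>B. s_act sm sg (h b) b)"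
  have "?coords g'"
    using sx sg_sum_s_act[OF r r0 B(2)] g unfolding x_eq g'_def by simp
  then have "(THE h. ?coords h) = g'"
    by (intro the1_equality unique[rule_format] zero_closed)
  moreover have "?coords (\<lambda>_. 0)"
    using B by (simp add: s_act_eq_t_act t_act_0 subsetD)
  then have "(THE h. ?coords h) = (\<lambda>_. 0)"
    by (intro the1_equality unique[rule_format] zero_closed)
  ultimately have "g' b = 0" for b
    by simp
  then have r_coeffs: "map_poly r (g b) = 0" for b
    by (simp add: g'_def)
  have "g b = 0" for b
  proof (rule poly_eqI)
    fix i
    have "r (coeff (g b) i) = 0"
      using coeff_map_poly[of r, OF r0, of "g b" i] by (simp add: r_coeffs)
    then show "coeff (g b) i = coeff 0 i"
      using r[of "coeff (g b) i"] q by (simp add: power_0_left)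
  qed
  then show "x = 0"
    using B by (simp add: x_eq s_act_eq_t_act t_act_0 subsetD)
qed

lemma sg_inj_on:
  assumes free: "free_fin_rank_sigma sm sg H" and perfect: "surj (\<lambda>c::'k. c ^ q)"
  shows "inj_on sg H"
proof (rule inj_onI)
  define r where "r = inv (\<lambda>c::'k. c ^ q)"
  have r: "r c ^ q = c" for c
    unfolding r_def using surj_f_inv_f[OF perfect] by simp
  have q: "q > 0"
    using r[of 0] by (cases q) auto
  fix x y assume xy: "x \<in> H" "y \<in> H" "sg x = sg y"
  then have "sg (x - y) = 0"
    by (simp add: additive_diff[OF sg_add])
  with xy show "x = y"
    using sg_eq_0_imp_eq_0[OF free q r diff_closed] by simp
qed

lemma lincomb_closed: "V \<subseteq> H \<Longrightarrow> lincomb sm V c \<in> H"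
  unfolding lincomb_def by (rule sum_closed) (auto intro: sm_closed)

lemma sm_lincomb: "V \<subseteq> H \<Longrightarrow> sm a (lincomb sm V c) = lincomb sm V (\<lambda>w. a * c w)"
  unfolding lincomb_def
  by (subst additive_sum[OF sm_add_right]) (auto intro: sm_closed simp: sm_mult subsetD)

lemma sum_lincomb:
  "V \<subseteq> H \<Longrightarrow> (\<Sum>i\<in>I. lincomb sm V (c i)) = lincomb sm V (\<lambda>w. \<Sum>i\<in>I. c i w)"
  unfolding lincomb_def by (subst sum.swap) (simp add: sm_sum_left subsetD)

lemma t_act_lincomb:
  "V \<subseteq> H \<Longrightarrow> t_act sm tt f (lincomb sm V c) = (\<Sum>w\<in>V. sm (c w) (t_act sm tt f w))"
  unfolding lincomb_def
  by (subst additive_sum[OF t_act_add_right]) (auto intro: sm_closed simp: t_act_sm_right subsetD)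

end


section \<open>Linear algebra and polynomials\<close>

lemma sum_eliminate_unknown:
  fixes c :: "'i \<Rightarrow> 'w \<Rightarrow> 'k::field"
  assumes "finite S" "j \<in> S"
  shows "(\<Sum>i\<in>S. (a(j := - (\<Sum>i\<in>S - {j}. a i * c i w) / c j w)) i * c i u) =
    (\<Sum>i\<in>S - {j}. a i * (c i u - c i w / c j w * c j u))"
proof -
  have "(\<Sum>i\<in>S. (a(j := - (\<Sum>i\<in>S - {j}. a i * c i w) / c j w)) i * c i u) =
      (\<Sum>i\<in>S - {j}. a i * c i u) - (\<Sum>i\<in>S - {j}. a i * c i w) / c j w * c j u"
    using assms by (simp add: sum.remove)
  also have "\<dots> = (\<Sum>i\<in>S - {j}. a i * c i u - a i * c i w / c j w * c j u)"
    by (simp add: sum_subtractf sum_distrib_right sum_divide_distrib)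
  finally show ?thesis
    by (simp add: right_diff_distrib mult.assoc)
qed

lemma homogeneous_system_nontrivial_solution:
  fixes c :: "'i \<Rightarrow> 'w \<Rightarrow> 'k::field"
  assumes "finite W" "finite S" "card W < card S"
  shows "\<exists>a. (\<exists>i\<in>S. a i \<noteq> 0) \<and> (\<forall>w\<in>W. (\<Sum>i\<in>S. a i * c i w) = 0)"
  using assms
proof (induction W arbitrary: S c rule: finite_induct)
  case empty
  then obtain i where "i \<in> S"
    by fastforce
  then show ?case
    by (intro exI[of _ "\<lambda>_. 1"]) auto
next
  case (insert w W)
  show ?case
  proof (cases "\<forall>i\<in>S. c i w = 0")
    case True
    moreover obtain a where "\<exists>i\<in>S. a i \<noteq> 0" "\<forall>u\<in>W. (\<Sum>i\<in>S. a i * c i u) = 0"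
      using insert.IH[of S c] insert.prems insert.hyps by auto
    ultimately show ?thesis
      by (intro exI[of _ a]) auto
  next
    case False
    then obtain j where j: "j \<in> S" "c j w \<noteq> 0"
      by auto
    define d where "d i u = c i u - c i w / c j w * c j u" for i u
    have "card W < card (S - {j})"
      using insert j by (simp add: card_Diff_singleton)
    then obtain a' where a': "\<exists>i\<in>S - {j}. a' i \<noteq> 0" "\<forall>u\<in>W. (\<Sum>i\<in>S - {j}. a' i * d i u) = 0"
      using insert.IH[of "S - {j}" d] insert.prems by auto
    define a where "a = a'(j := - (\<Sum>i\<in>S - {j}. a' i * c i w) / c j w)"
    have reduce: "(\<Sum>i\<in>S. a i * c i u) = (\<Sum>i\<in>S - {j}. a' i * d i u)" for u
      unfolding a_def d_def by (rule sum_eliminate_unknown[OF insert.prems(1) j(1)])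
    have "d i w = 0" for i
      using j by (simp add: d_def)
    then show ?thesis
      using a' reduce by (intro exI[of _ a]) (auto simp: a_def)
  qed
qed

lemma monic_dvd_eq_if_degree_eq:
  fixes p r :: "'a::idom poly"
  assumes "p dvd r" "lead_coeff p = 1" "lead_coeff r = 1" "degree r = degree p"
  shows "p = r"
proof -
  obtain k where r: "r = p * k"
    using assms(1) by (elim dvdE)
  have "p \<noteq> 0" "k \<noteq> 0"
    using assms(2,3) r by auto
  then have "degree k = 0"
    using assms(4) r by (simp add: degree_mult_eq)
  moreover have "lead_coeff (p * k) = 1"
    using assms(3) by (simp only: r)
  then have "lead_coeff k = 1"
    by (simp add: lead_coeff_mult assms(2))
  ultimately have "k = 1"
    by (metis coeff_pCons_0 degree_0_id one_pCons)
  then show ?thesis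
    using r by simp
qed

lemma dvd_cancel_linear_factor:
  fixes \<mu> G :: "'a::idom poly"
  assumes "poly \<mu> \<beta> \<noteq> 0" "\<mu> dvd [:-\<beta>, 1:] * G"
  shows "\<mu> dvd G"
proof -
  obtain h where h: "[:-\<beta>, 1:] * G = \<mu> * h"
    using assms(2) by (elim dvdE)
  have "poly ([:-\<beta>, 1:] * G) \<beta> = 0"
    by simp
  then have "poly \<mu> \<beta> * poly h \<beta> = 0"
    by (simp only: h poly_mult)
  with assms(1) have "[:-\<beta>, 1:] dvd h"
    by (simp add: poly_eq_0_iff_dvd)
  then obtain h' where h': "h = [:-\<beta>, 1:] * h'"
    by (elim dvdE)
  have "[:-\<beta>, 1:] * G = \<mu> * ([:-\<beta>, 1:] * h')"
    by (simp only: h h')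
  also have "\<dots> = [:-\<beta>, 1:] * (\<mu> * h')"
    by (rule mult.left_commute)
  finally have "[:-\<beta>, 1:] * G = [:-\<beta>, 1:] * (\<mu> * h')" .
  then have "G = \<mu> * h'"
    by (subst (asm) mult_left_cancel) simp_all
  then show ?thesis
    by (rule dvdI)
qed

lemma dvd_cancel_if_no_common_root:
  fixes \<mu> R G :: "'a::alg_closed_field poly"
  assumes "R \<noteq> 0" "\<And>z. poly R z = 0 \<Longrightarrow> poly \<mu> z \<noteq> 0" "\<mu> dvd R * G"
  shows "\<mu> dvd G"
  using assms
proof (induction "degree R" arbitrary: R)
  case 0
  define c where "c = coeff R 0"
  have R: "R = [:c:]"
    using 0 by (simp add: c_def degree_0_id)
  with 0 have "c \<noteq> 0" "\<mu> dvd smult c G"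
    by simp_all
  then show ?case
    by (simp add: dvd_smult_cancel)
next
  case (Suc n)
  then obtain \<beta> where "poly R \<beta> = 0"
    using alg_closed_imp_poly_has_root[of R] by auto
  then obtain R' where R: "R = [:-\<beta>, 1:] * R'"
    by (metis dvdE poly_eq_0_iff_dvd)
  with Suc.prems(1) have "R' \<noteq> 0"
    by auto
  have "degree R = degree [:-\<beta>, 1:] + degree R'"
    unfolding R by (rule degree_mult_eq) (simp_all add: \<open>R' \<noteq> 0\<close>)
  with Suc.hyps(2) have "degree R' = n"
    by simp
  moreover have "\<mu> dvd R' * G"
  proof (rule dvd_cancel_linear_factor)
    show "poly \<mu> \<beta> \<noteq> 0"
      using Suc.prems(2) \<open>poly R \<beta> = 0\<close> by blast
    show "\<mu> dvd [:-\<beta>, 1:] * (R' * G)"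
      using Suc.prems(3) unfolding R by (simp only: mult.assoc)
  qed
  moreover have "poly \<mu> z \<noteq> 0" if "poly R' z = 0" for z
    using Suc.prems(2)[of z] that R by simp
  ultimately show ?case
    using Suc.hyps(1) \<open>R' \<noteq> 0\<close> by metis
qed

lemma ideal_monic_generator:
  fixes P :: "'k::field poly \<Rightarrow> bool"
  assumes "P f" "f \<noteq> 0"
    and mult: "\<And>f g. P f \<Longrightarrow> P (g * f)" and diff: "\<And>f g. P f \<Longrightarrow> P g \<Longrightarrow> P (f - g)"
  obtains \<mu> where "lead_coeff \<mu> = 1" "P \<mu>" "\<And>g. P g \<Longrightarrow> \<mu> dvd g"
proof -
  obtain p where p: "P p" "p \<noteq> 0" and least: "\<And>p'. P p' \<Longrightarrow> p' \<noteq> 0 \<Longrightarrow> degree p \<le> degree p'"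
    using ex_has_least_nat[of "\<lambda>p. P p \<and> p \<noteq> 0" f degree] assms(1,2) by blast
  define \<mu> where "\<mu> = smult (inverse (lead_coeff p)) p"
  have \<mu>: "lead_coeff \<mu> = 1" "\<mu> \<noteq> 0" "degree \<mu> = degree p"
    unfolding \<mu>_def using p(2) by (auto simp: lead_coeff_smult)
  have "P \<mu>"
    using mult[OF p(1), of "[:inverse (lead_coeff p):]"] by (simp add: \<mu>_def)
  moreover have "\<mu> dvd g" if "P g" for g
  proof -
    have "P (g mod \<mu>)"
      using diff[OF that mult[OF \<open>P \<mu>\<close>, of "g div \<mu>"]] by (simp add: minus_div_mult_eq_mod)
    then have "g mod \<mu> = 0"
      using least[of "g mod \<mu>"] degree_mod_less'[OF \<mu>(2), of g] \<mu>(3) by (cases "g mod \<mu> = 0") auto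
    then show ?thesis
      by (simp add: mod_eq_0_iff_dvd)
  qed
  ultimately show ?thesis
    using that \<mu>(1) by blast
qed

section \<open>Frobenius twists of polynomials\<close>

lemma power_char_inj:
  fixes x y :: "'k::field"
  assumes "prime CHAR('k)" "q = CHAR('k) ^ e" "x ^ q = y ^ q"
  shows "x = y"
proof -
  have "(x - y) ^ q = 0"
    using freshmans_dream'[OF assms(1,2), of "x - y" y] assms(3) by simp
  then show ?thesis
    by simp
qed

lemma poly_frob_poly:
  fixes g :: "'k::field poly"
  assumes "prime CHAR('k)" "q = CHAR('k) ^ e"
  shows "poly (frob_poly q g) (x ^ q) = poly g x ^ q"
proof -
  have "q > 0"
    using assms prime_gt_0_nat by simp
  then show ?thesis
    by (induction g) (simp_all add: map_poly_pCons power_mult_distrib freshmans_dream'[OF assms])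
qed

lemma frob_poly_surj:
  fixes \<mu> :: "'k::alg_closed_field poly"
  assumes "q > 0"
  obtains \<nu> where "frob_poly q \<nu> = \<mu>"
proof -
  define r where "r c = (SOME y. y ^ q = c)" for c :: 'k
  have r: "r c ^ q = c" for c
    unfolding r_def by (rule someI_ex) (rule nth_root_exists[OF assms])
  have "r 0 = 0"
    using r[of 0] by simp
  then have "frob_poly q (map_poly r \<mu>) = \<mu>"
    using assms by (subst map_poly_map_poly) (auto simp: o_def r intro: map_poly_idI)
  then show ?thesis
    by (rule that)
qed

lemma inj_frobenius_orbit:
  fixes T :: "'k::field"
  assumes char: "prime CHAR('k)" "q = CHAR('k) ^ e"
    and aperiodic: "\<forall>j>0. T ^ (q ^ j) \<noteq> T"
  shows "inj (\<lambda>j. T ^ (q ^ j))"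
proof (rule linorder_injI)
  fix i j :: nat assume "i < j"
  show "T ^ (q ^ i) \<noteq> T ^ (q ^ j)"
  proof
    assume "T ^ (q ^ i) = T ^ (q ^ j)"
    also have "\<dots> = (T ^ (q ^ (j - i))) ^ (q ^ i)"
      using \<open>i < j\<close> by (simp flip: power_mult power_add)
    finally have "T ^ (q ^ i) = (T ^ (q ^ (j - i))) ^ (q ^ i)" .
    moreover have "q ^ i = CHAR('k) ^ (e * i)"
      by (simp add: char(2) power_mult)
    ultimately have "T = T ^ (q ^ (j - i))"
      using power_char_inj[OF char(1)] by blast
    moreover have "T ^ (q ^ (j - i)) \<noteq> T"
      using aperiodic \<open>i < j\<close> by simp
    ultimately show False
      by simp
  qed
qed

lemma is_kbar_aperiodic:
  fixes T :: "'k::alg_closed_field"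
  assumes "is_kbar q T"
  shows "\<forall>j>0. T ^ (q ^ j) \<noteq> T"
proof (intro allI impI notI)
  fix j :: nat assume "j > 0" and periodic: "T ^ (q ^ j) = T"
  have char: "prime CHAR('k)" and "\<exists>e>0. q = CHAR('k) ^ e"
    and transcendental: "\<And>f. (\<forall>i. coeff f i \<in> Fq q) \<Longrightarrow> poly f T = 0 \<Longrightarrow> f = 0"
    using assms unfolding is_kbar_def by blast+
  then obtain e where e: "e > 0" "q = CHAR('k) ^ e"
    by blast
  have "2 \<le> CHAR('k)"
    using char by (rule prime_ge_2_nat)
  also have "\<dots> \<le> q"
    using e \<open>2 \<le> CHAR('k)\<close> self_le_power[of "CHAR('k)" e] by simp
  finally have "q \<ge> 2" .
  then have "q \<le> q ^ j"
    using \<open>j > 0\<close> self_le_power[of q j] by simp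
  with \<open>q \<ge> 2\<close> have "1 \<noteq> q ^ j"
    by linarith
  have "(-1 + 1 :: 'k) ^ q = (-1) ^ q + 1 ^ q"
    by (rule freshmans_dream'[OF char e(2)])
  then have minus_one: "(-1 :: 'k) ^ q = -1"
    using \<open>q \<ge> 2\<close> by (simp add: power_0_left eq_neg_iff_add_eq_0)
  define P :: "'k poly" where "P = monom 1 (q ^ j) - monom 1 1"
  have "coeff P i \<in> {0, 1, -1}" for i
    by (auto simp: P_def coeff_monom)
  moreover have "{0, 1, -1 :: 'k} \<subseteq> Fq q"
    using minus_one \<open>q \<ge> 2\<close> by (auto simp: Fq_def power_0_left)
  ultimately have "\<forall>i. coeff P i \<in> Fq q"
    by blast
  moreover have "poly P T = 0"
    using periodic by (simp add: P_def poly_monom)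
  ultimately have "P = 0"
    by (rule transcendental)
  moreover have "coeff P (q ^ j) = 1"
    unfolding P_def coeff_diff coeff_monom if_not_P[OF \<open>1 \<noteq> q ^ j\<close>] by simp
  ultimately show False
    by simp
qed

lemma frobenius_orbit_not_root:
  fixes \<mu> :: "'k::field poly"
  assumes char: "prime CHAR('k)" "q = CHAR('k) ^ e"
    and aperiodic: "\<forall>j>0. T ^ (q ^ j) \<noteq> T" and "\<mu> \<noteq> 0"
    and roots_closed: "\<And>\<alpha>. poly \<mu> \<alpha> = 0 \<Longrightarrow> \<alpha> \<noteq> T \<Longrightarrow> poly \<mu> (\<alpha> ^ q) = 0"
  shows "poly \<mu> (T ^ q) \<noteq> 0"
proof
  assume root: "poly \<mu> (T ^ q) = 0"
  have orbit: "poly \<mu> (T ^ (q ^ Suc j)) = 0" for j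
  proof (induction j)
    case 0
    show ?case
      using root by simp
  next
    case (Suc j)
    have "T ^ (q ^ Suc j) \<noteq> T"
      using aperiodic zero_less_Suc by blast
    with Suc.IH have "poly \<mu> ((T ^ (q ^ Suc j)) ^ q) = 0"
      by (rule roots_closed)
    then show ?case
      by (simp flip: power_mult add: mult.commute)
  qed
  have "inj ((\<lambda>j. T ^ (q ^ j)) \<circ> Suc)"
    by (rule inj_compose[OF inj_frobenius_orbit[OF char aperiodic] inj_Suc])
  then have "infinite (range ((\<lambda>j. T ^ (q ^ j)) \<circ> Suc))"
    by (rule range_inj_infinite)
  moreover have "range ((\<lambda>j. T ^ (q ^ j)) \<circ> Suc) \<subseteq> {x. poly \<mu> x = 0}"
    using orbit by auto
  ultimately show False
    using poly_roots_finite[OF \<open>\<mu> \<noteq> 0\<close>] finite_subset by blast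
qed

lemma poly_frob_poly_linear_power_eq_0:
  fixes T :: "'k::alg_closed_field"
  assumes char: "prime CHAR('k)" "q = CHAR('k) ^ e"
    and "poly (frob_poly q ([:-T, 1:] ^ n)) z = 0"
  shows "z = T ^ q"
proof -
  have q: "q > 0"
    using char prime_gt_0_nat by simp
  obtain w where w: "w ^ q = z"
    using nth_root_exists[OF q] by blast
  have "poly ([:-T, 1:] ^ n) w ^ q = 0"
    using assms(3) poly_frob_poly[OF char] w by metis
  then have "w = T"
    using q by (simp add: poly_power)
  then show ?thesis
    using w by simp
qed

lemma coeffs_in_Fq_if_frob_poly_fixed:
  fixes \<mu> :: "'k::field poly"
  assumes "q > 0" "frob_poly q \<mu> = \<mu>"
  shows "coeff \<mu> i \<in> Fq q"
  using assms coeff_map_poly[of "\<lambda>c. c ^ q" \<mu> i] by (simp add: Fq_def)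

lemma poly_root_power_if_dvd:
  fixes \<mu> \<nu> :: "'k::field poly"
  assumes char: "prime CHAR('k)" "q = CHAR('k) ^ e" and \<nu>: "frob_poly q \<nu> = \<mu>"
    and dvd: "\<mu> dvd [:-T, 1:] ^ n * \<nu>" and "poly \<mu> \<alpha> = 0" "\<alpha> \<noteq> T"
  shows "poly \<mu> (\<alpha> ^ q) = 0"
proof -
  obtain k where "[:-T, 1:] ^ n * \<nu> = \<mu> * k"
    using dvd by (elim dvdE)
  then have "poly ([:-T, 1:] ^ n * \<nu>) \<alpha> = 0"
    using \<open>poly \<mu> \<alpha> = 0\<close> by (metis mult_zero_left poly_mult)
  with \<open>\<alpha> \<noteq> T\<close> have "poly \<nu> \<alpha> = 0"
    by (simp add: poly_power)
  moreover have "q > 0"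
    using char prime_gt_0_nat by simp
  ultimately show ?thesis
    using poly_frob_poly[OF char, of \<nu> \<alpha>] \<nu> by simp
qed

lemma frob_poly_fixed_if_dvd_twists:
  fixes \<mu> \<nu> :: "'k::alg_closed_field poly" and T :: 'k
  assumes char: "prime CHAR('k)" "q = CHAR('k) ^ e"
    and aperiodic: "\<forall>j>0. T ^ (q ^ j) \<noteq> T"
    and monic: "lead_coeff \<mu> = 1" and \<nu>: "frob_poly q \<nu> = \<mu>"
    and dvd_root: "\<mu> dvd [:-T, 1:] ^ n1 * \<nu>"
    and dvd_frob: "\<mu> dvd frob_poly q ([:-T, 1:] ^ n0) * frob_poly q \<mu>"
  shows "frob_poly q \<mu> = \<mu>"
proof -
  have q: "q > 0"
    using char prime_gt_0_nat by simp
  have "\<mu> \<noteq> 0"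
    using monic by auto
  have not_root: "poly \<mu> (T ^ q) \<noteq> 0"
    using poly_root_power_if_dvd[OF char \<nu> dvd_root]
    by (rule frobenius_orbit_not_root[OF char aperiodic \<open>\<mu> \<noteq> 0\<close>])
  have "lead_coeff (frob_poly q ([:-T, 1:] ^ n0)) = 1"
    using q by (simp add: lead_coeff_map_poly_nz lead_coeff_power)
  then have "frob_poly q ([:-T, 1:] ^ n0) \<noteq> 0"
    by auto
  then have "\<mu> dvd frob_poly q \<mu>"
  proof (rule dvd_cancel_if_no_common_root[OF _ _ dvd_frob])
    fix z assume "poly (frob_poly q ([:-T, 1:] ^ n0)) z = 0"
    then show "poly \<mu> z \<noteq> 0"
      using not_root poly_frob_poly_linear_power_eq_0[OF char] by blast
  qed
  moreover have "degree (frob_poly q \<mu>) = degree \<mu>"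
    using q by (simp add: degree_map_poly)
  moreover have "lead_coeff (frob_poly q \<mu>) = 1"
    using q monic by (subst lead_coeff_map_poly_nz) simp_all
  ultimately show ?thesis
    using monic monic_dvd_eq_if_degree_eq[of \<mu> "frob_poly q \<mu>"] by simp
qed

section \<open>The annihilator of \<open>H\<^sub>1/H\<^sub>0\<close>\<close>

locale kts_pair = K0: kts q sm tt sg H0 + K1: kts q sm tt sg H1
  for q :: nat and sm :: "'k::field \<Rightarrow> 'm::ab_group_add \<Rightarrow> 'm" and tt sg :: "'m \<Rightarrow> 'm"
    and H0 H1 :: "'m set" +
  assumes subset: "H0 \<subseteq> H1"
begin

lemma annihilates_mult: "annihilates sm tt H1 H0 f \<Longrightarrow> annihilates sm tt H1 H0 (g * f)"
  by (simp add: annihilates_def K1.t_act_mult K0.t_act_closed K0.tt_closed)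

lemma annihilates_diff:
  "annihilates sm tt H1 H0 f \<Longrightarrow> annihilates sm tt H1 H0 g \<Longrightarrow> annihilates sm tt H1 H0 (f - g)"
  by (simp add: annihilates_def K1.t_act_diff K0.diff_closed)

context
  fixes V :: "'m set"
  assumes V: "finite V" "V \<subseteq> H1"
    and span: "\<forall>m\<in>H1. \<exists>c. m - lincomb sm V c \<in> H0"
begin

lemma dependent_modulo:
  assumes S: "finite S" "card V < card S" and y: "\<And>i. i \<in> S \<Longrightarrow> y i \<in> H1"
  shows "\<exists>a. (\<exists>i\<in>S. a i \<noteq> 0) \<and> (\<Sum>i\<in>S. sm (a i) (y i)) \<in> H0"
proof -
  have "\<forall>i\<in>S. \<exists>c. y i - lincomb sm V c \<in> H0"
    using span y by blast
  then obtain C where C: "\<And>i. i \<in> S \<Longrightarrow> y i - lincomb sm V (C i) \<in> H0"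
    by (metis bchoice)
  obtain a where a: "\<exists>i\<in>S. a i \<noteq> 0" "\<forall>w\<in>V. (\<Sum>i\<in>S. a i * C i w) = 0"
    using homogeneous_system_nontrivial_solution[OF V(1) S] by blast
  define e where "e i = y i - lincomb sm V (C i)" for i
  have e: "e i \<in> H1" if "i \<in> S" for i
    using C[OF that] subset by (auto simp: e_def)
  have "(\<Sum>i\<in>S. sm (a i) (y i)) = (\<Sum>i\<in>S. sm (a i) (lincomb sm V (C i)) + sm (a i) (e i))"
    using e V(2) by (intro sum.cong) (simp_all add: e_def K1.sm_add_right[symmetric] K1.lincomb_closed)
  also have "\<dots> = lincomb sm V (\<lambda>w. \<Sum>i\<in>S. a i * C i w) + (\<Sum>i\<in>S. sm (a i) (e i))"
    using V(2) by (simp add: sum.distrib K1.sm_lincomb K1.sum_lincomb)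
  also have "lincomb sm V (\<lambda>w. \<Sum>i\<in>S. a i * C i w) = 0"
    using a(2) V(2) by (simp add: lincomb_def K1.sm_zero_left subsetD)
  finally have "(\<Sum>i\<in>S. sm (a i) (y i)) = (\<Sum>i\<in>S. sm (a i) (e i))"
    by simp
  also have "\<dots> \<in> H0"
    using C by (intro K0.sum_closed K0.sm_closed) (simp add: e_def)
  finally show ?thesis
    using a(1) by blast
qed

lemma annihilates_element:
  assumes v: "v \<in> H1"
  shows "\<exists>f. f \<noteq> 0 \<and> t_act sm tt f v \<in> H0"
proof -
  obtain a where a: "\<exists>i\<in>{..card V}. a i \<noteq> 0"
    and rel: "(\<Sum>i\<le>card V. sm (a i) (t_act sm tt (monom 1 i) v)) \<in> H0"
    using dependent_modulo[of "{..card V}" "\<lambda>i. t_act sm tt (monom 1 i) v"]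
    by (auto intro: K1.t_act_closed K1.tt_closed v)
  define f where "f = (\<Sum>i\<le>card V. monom (a i) i)"
  have monom_eq: "monom (a i) i = smult (a i) (monom 1 i)" for i
    by (simp add: smult_monom)
  have "coeff f i = a i" if "i \<le> card V" for i
    using that by (simp add: f_def coeff_sum)
  with a have "f \<noteq> 0"
    by (metis atMost_iff coeff_0)
  moreover have "t_act sm tt f v = (\<Sum>i\<le>card V. sm (a i) (t_act sm tt (monom 1 i) v))"
    by (simp add: f_def monom_eq K1.t_act_sum K1.t_act_smult v)
  ultimately show ?thesis
    using rel by auto
qed

end

lemma annihilator_exists:
  assumes "fin_dim_quotient sm H1 H0"
  shows "\<exists>f. f \<noteq> 0 \<and> annihilates sm tt H1 H0 f"
proof -
  obtain V where V: "finite V" "V \<subseteq> H1" and span: "\<forall>m\<in>H1. \<exists>c. m - lincomb sm V c \<in> H0"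
    using assms unfolding fin_dim_quotient_def lincomb_def by blast
  have "\<forall>v\<in>V. \<exists>f. f \<noteq> 0 \<and> t_act sm tt f v \<in> H0"
    using annihilates_element[OF V span] V(2) by blast
  then obtain F where F: "\<And>v. v \<in> V \<Longrightarrow> F v \<noteq> 0 \<and> t_act sm tt (F v) v \<in> H0"
    by (metis bchoice)
  define P where "P = (\<Prod>v\<in>V. F v)"
  have "P \<noteq> 0"
    using F V(1) by (simp add: P_def)
  have P_V: "t_act sm tt P v \<in> H0" if v: "v \<in> V" for v
  proof -
    have "P = (\<Prod>w\<in>V - {v}. F w) * F v"
      using V(1) v by (simp add: P_def prod.remove mult.commute)
    then have "t_act sm tt P v = t_act sm tt (\<Prod>w\<in>V - {v}. F w) (t_act sm tt (F v) v)"
      using v V(2) by (auto simp: K1.t_act_mult)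
    then show ?thesis
      using F[OF v] by (simp add: K0.t_act_closed K0.tt_closed)
  qed
  have "t_act sm tt P m \<in> H0" if m: "m \<in> H1" for m
  proof -
    obtain c where e: "m - lincomb sm V c \<in> H0"
      using span m by blast
    have "t_act sm tt P m = t_act sm tt P (lincomb sm V c) + t_act sm tt P (m - lincomb sm V c)"
      using e subset V(2) by (simp add: K1.t_act_add_right[symmetric] K1.lincomb_closed subsetD)
    also have "\<dots> = (\<Sum>w\<in>V. sm (c w) (t_act sm tt P w)) + t_act sm tt P (m - lincomb sm V c)"
      using V(2) by (simp add: K1.t_act_lincomb)
    also have "\<dots> \<in> H0"
      using P_V e
      by (intro K0.add_closed K0.sum_closed K0.sm_closed) (simp_all add: K0.t_act_closed K0.tt_closed)
    finally show ?thesis .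
  qed
  with \<open>P \<noteq> 0\<close> show ?thesis
    unfolding annihilates_def by blast
qed

lemma annihilator_generator:
  assumes "fin_dim_quotient sm H1 H0"
  obtains \<mu> where "lead_coeff \<mu> = 1" "annihilates sm tt H1 H0 \<mu>"
    "\<And>g. annihilates sm tt H1 H0 g \<Longrightarrow> \<mu> dvd g"
proof -
  obtain f where f: "annihilates sm tt H1 H0 f" "f \<noteq> 0"
    using annihilator_exists[OF assms] by blast
  show ?thesis
    by (rule ideal_monic_generator[of "annihilates sm tt H1 H0" f, OF f],
        erule annihilates_mult, erule (1) annihilates_diff, rule that; assumption)
qed

text \<open>Applying \<open>\<sigma>\<close> turns \<open>frob_poly q p * frob_poly q \<mu>\<close> into \<open>p * \<mu>\<close> acting on \<open>\<sigma> x\<close>; as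
  \<open>\<mu> (\<sigma> x) \<in> H\<^sub>0\<close> and \<open>p H\<^sub>0 \<subseteq> \<sigma> H\<^sub>0\<close>, injectivity of \<open>\<sigma>\<close> on \<open>H\<^sub>1\<close> pulls the result back into \<open>H\<^sub>0\<close>.\<close>
lemma annihilates_frob_twist:
  assumes q: "q > 0" and inj: "inj_on sg H1"
    and p: "\<And>m. m \<in> H0 \<Longrightarrow> \<exists>m'\<in>H0. t_act sm tt p m = sg m'"
    and \<mu>: "annihilates sm tt H1 H0 \<mu>"
  shows "annihilates sm tt H1 H0 (frob_poly q p * frob_poly q \<mu>)"
  unfolding annihilates_def
proof
  fix x assume x: "x \<in> H1"
  define y where "y = t_act sm tt (frob_poly q \<mu>) x"
  have y: "y \<in> H1"
    unfolding y_def using x by (intro K1.t_act_closed K1.tt_closed)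
  have "sg y = t_act sm tt \<mu> (sg x)"
    unfolding y_def by (rule K1.sg_t_act_frob_poly[OF q x])
  then have "sg y \<in> H0"
    using \<mu> x K1.sg_closed by (simp add: annihilates_def)
  then obtain z where z: "z \<in> H0" "t_act sm tt p (sg y) = sg z"
    using p by blast
  have "sg (t_act sm tt (frob_poly q p) y) = sg z"
    using K1.sg_t_act_frob_poly[OF q y] z(2) by simp
  then have "t_act sm tt (frob_poly q p) y = z"
    using inj y z(1) subset by (auto intro: K1.t_act_closed K1.tt_closed dest: inj_onD)
  with z(1) show "t_act sm tt (frob_poly q p * frob_poly q \<mu>) x \<in> H0"
    by (simp add: K1.t_act_mult[OF x] y_def)
qed

lemma annihilates_root_twist:
  assumes q: "q > 0"
    and p: "\<And>m. m \<in> H1 \<Longrightarrow> \<exists>m'\<in>H1. t_act sm tt p m = sg m'"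
    and \<mu>: "annihilates sm tt H1 H0 \<mu>" and \<nu>: "frob_poly q \<nu> = \<mu>"
  shows "annihilates sm tt H1 H0 (p * \<nu>)"
  unfolding annihilates_def
proof
  fix x assume x: "x \<in> H1"
  obtain w where w: "w \<in> H1" "t_act sm tt p x = sg w"
    using p[OF x] by blast
  have "t_act sm tt (p * \<nu>) x = t_act sm tt \<nu> (sg w)"
    using K1.t_act_mult[OF x, of \<nu> p] w(2) by (simp add: mult.commute)
  also have "\<dots> = sg (t_act sm tt \<mu> w)"
    using K1.sg_t_act_frob_poly[OF q w(1), of \<nu>] \<nu> by simp
  also have "\<dots> \<in> H0"
    using \<mu> w(1) K0.sg_closed by (simp add: annihilates_def)
  finally show "t_act sm tt (p * \<nu>) x \<in> H0" .
qed

end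

theorem theorem4:
  fixes q :: nat and T :: "'k::alg_closed_field"
    and sm :: "'k \<Rightarrow> 'm::ab_group_add \<Rightarrow> 'm" and tt sg :: "'m \<Rightarrow> 'm"
    and H0 H1 :: "'m set"
  assumes "is_kbar q T"
    and "dual_t_motive q T sm tt sg H1"
    and "dual_t_motive q T sm tt sg H0"
    and "H0 \<subseteq> H1"
    and "fin_dim_quotient sm H1 H0"
  shows "\<exists>a :: 'k poly. a \<noteq> 0 \<and> (\<forall>i. coeff a i \<in> Fq q) \<and> (\<forall>m\<in>H1. t_act sm tt a m \<in> H0)"
proof -
  obtain e where char: "prime CHAR('k)" "q = CHAR('k) ^ e"
    using assms(1) unfolding is_kbar_def by blast
  have q: "q > 0"
    using char prime_gt_0_nat by simp
  interpret kts_pair q sm tt sg H0 H1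
    using assms(2-4) unfolding kts_pair_def kts_pair_axioms_def kts_def dual_t_motive_def by blast
  have "surj (\<lambda>c::'k. c ^ q)"
    unfolding surj_def using nth_root_exists[OF q] by metis
  then have inj: "inj_on sg H1"
    using assms(2) K1.sg_inj_on unfolding dual_t_motive_def by blast
  obtain n0 n1 where n0: "\<forall>m\<in>H0. \<exists>m'\<in>H0. t_act sm tt ([:-T, 1:] ^ n0) m = sg m'"
    and n1: "\<forall>m\<in>H1. \<exists>m'\<in>H1. t_act sm tt ([:-T, 1:] ^ n1) m = sg m'"
    using assms(2,3) unfolding dual_t_motive_def by blast
  obtain \<mu> where \<mu>: "lead_coeff \<mu> = 1" "annihilates sm tt H1 H0 \<mu>"
    and generator: "\<And>g. annihilates sm tt H1 H0 g \<Longrightarrow> \<mu> dvd g"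
    by (rule annihilator_generator[OF assms(5)], rule that; assumption)
  obtain \<nu> where \<nu>: "frob_poly q \<nu> = \<mu>"
    using frob_poly_surj[OF q] by blast
  have "frob_poly q \<mu> = \<mu>"
  proof (rule frob_poly_fixed_if_dvd_twists[OF char is_kbar_aperiodic[OF assms(1)] \<mu>(1) \<nu>])
    show "\<mu> dvd [:-T, 1:] ^ n1 * \<nu>"
      using n1 by (intro generator annihilates_root_twist[OF q _ \<mu>(2) \<nu>]) blast
    show "\<mu> dvd frob_poly q ([:-T, 1:] ^ n0) * frob_poly q \<mu>"
      using n0 by (intro generator annihilates_frob_twist[OF q inj _ \<mu>(2)]) blast
  qed
  then have "\<forall>i. coeff \<mu> i \<in> Fq q"
    using q by (simp add: coeffs_in_Fq_if_frob_poly_fixed)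
  moreover have "\<mu> \<noteq> 0"
    using \<mu>(1) by auto
  ultimately show ?thesis
    using \<mu>(2) unfolding annihilates_def by blast
qed

end
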